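(* Let $V=(x_1,\dots,x_n)$ be a list of $n$ real numbers in $[L,U]$, listed in non-decreasing order, and let $k$ be an integer with $k<n$. Then a $k$-maximal variance subset of $V$ can be obtained by removing $n-k$ consecutive elements of $V$, i.e. there exists a $k$-maximal variance subset of the form $\{x_1,\dots,x_i\}\cup\{x_{i+n-k+1},\dots,x_n\}$ for some $0\le i\le k$.
   Context: For a finite (multi)set $Q$ of reals with $|Q|=k$, $\mathrm{Var}[Q]=\frac{1}{k}\sum_{q\in Q}(q-\mu_Q)^2$ with $\mu_Q=\frac1k\sum_{q\in Q}q$. A subset $Q\subset V$ (a choice of $k$ of the $n$ entries) is a $k$-maximal variance subset of $V$ if $|Q|=k$ and $\mathrm{Var}[Q']\le\mathrm{Var}[Q]$ for every $Q'\subset V$ with $|Q'|=k$. *)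

theory Defs
  imports Main "HOL.Real"
begin

text \<open>A sub(multi)set of the list V is given by a set I of positions (0-based) in V.\<close>

definition mean_idx :: "real list \<Rightarrow> nat set \<Rightarrow> real" where
  "mean_idx V I = (\<Sum>i\<in>I. V ! i) / real (card I)"

definition var_idx :: "real list \<Rightarrow> nat set \<Rightarrow> real" where
  "var_idx V I = (\<Sum>i\<in>I. (V ! i - mean_idx V I)^2) / real (card I)"

definition is_kmaxvar :: "real list \<Rightarrow> nat \<Rightarrow> nat set \<Rightarrow> bool" where
  "is_kmaxvar V k I \<longleftrightarrow> I \<subseteq> {..<length V} \<and> card I = k \<and>
     (\<forall>J. J \<subseteq> {..<length V} \<and> card J = k \<longrightarrow> var_idx V J \<le> var_idx V I)"

end

theory Submission
  imports Defs
begin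

text \<open>With the rest of the chosen set fixed, the variance is a convex quadratic in the one remaining
  value. So an element x_b lying between two unchosen elements x_a \<le> x_b \<le> x_c can be exchanged for one of
  them without decreasing the variance. Among the maximal variance subsets take one whose complement
  has the smallest spread (largest minus smallest index). If that complement were not an interval, some
  chosen b would lie strictly between its extreme indices a and c, and exchanging b for a or c would
  yield a maximal variance subset whose complement has smaller spread.\<close>

lemma var_idx_eq_mean_square_diff:
  "var_idx V J = (\<Sum>i\<in>J. (V ! i)^2) / real (card J) - (mean_idx V J)^2"
proof (cases "card J = 0")
  case True
  then show ?thesis by (simp add: var_idx_def mean_idx_def)
next
  case False
  define m where "m = mean_idx V J"
  have card_pos: "real (card J) > 0" using False by simp
  have sum_eq: "(\<Sum>i\<in>J. V ! i) = real (card J) * m"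
    using card_pos by (simp add: m_def mean_idx_def)
  have "(\<Sum>i\<in>J. (V ! i - m)^2) = (\<Sum>i\<in>J. (V ! i)^2) - 2 * m * (\<Sum>i\<in>J. V ! i) + real (card J) * m^2"
    by (simp add: power2_diff sum.distrib sum_subtractf sum_distrib_left mult_ac)
  then show ?thesis
    using card_pos by (simp add: var_idx_def m_def[symmetric] sum_eq field_simps power2_eq_square)
qed

lemma convex_quadratic_le_max:
  fixes \<alpha> \<beta> \<gamma> a b c :: real
  assumes "0 \<le> \<alpha>" "a \<le> b" "b \<le> c"
  defines "q \<equiv> \<lambda>y. \<alpha> * y^2 + \<beta> * y + \<gamma>"
  shows "q b \<le> max (q a) (q c)"
proof (rule ccontr)
  assume "\<not> ?thesis"
  then have qa: "q a < q b" and qc: "q c < q b" by auto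
  have "(q b - q a) * (c - b) + (q b - q c) * (b - a) = - \<alpha> * (b - a) * (c - b) * (c - a)"
    unfolding q_def by (simp add: algebra_simps power2_eq_square)
  also have "\<dots> \<le> 0"
    using assms(1-3) by (simp add: mult_nonneg_nonneg)
  finally have le0: "(q b - q a) * (c - b) + (q b - q c) * (b - a) \<le> 0" .
  have "a \<noteq> b" "b \<noteq> c" using qa qc by auto
  then have "0 < (q b - q a) * (c - b) + (q b - q c) * (b - a)"
    using qa qc assms(2,3) by (simp add: add_pos_pos)
  with le0 show False by linarith
qed

lemma var_idx_insert:
  fixes V :: "real list"
  assumes "finite R" "y \<notin> R"
  defines "K \<equiv> real (card R + 1)" and "A \<equiv> \<Sum>i\<in>R. (V ! i)^2" and "B \<equiv> \<Sum>i\<in>R. V ! i"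
  shows "var_idx V (insert y R) = (1/K - 1/K^2) * (V ! y)^2 + (- 2 * B / K^2) * V ! y + (A/K - B^2/K^2)"
proof -
  have "var_idx V (insert y R) = (A + (V ! y)^2) / K - ((B + V ! y) / K)^2"
    using assms(1,2)
    by (simp add: var_idx_eq_mean_square_diff mean_idx_def K_def A_def B_def add.commute)
  also have "\<dots> = (1/K - 1/K^2) * (V ! y)^2 + (- 2 * B / K^2) * V ! y + (A/K - B^2/K^2)"
    by (simp add: power2_eq_square power_divide add_divide_distrib diff_divide_distrib algebra_simps)
  finally show ?thesis .
qed

lemma var_idx_le_max_exchange:
  fixes V :: "real list"
  assumes "finite I" "b \<in> I" "a \<notin> I" "c \<notin> I" "V ! a \<le> V ! b" "V ! b \<le> V ! c"
  shows "var_idx V I \<le> max (var_idx V (insert a (I - {b}))) (var_idx V (insert c (I - {b})))"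
proof -
  define R where "R = I - {b}"
  define K where "K = real (card R + 1)"
  have R: "finite R" "I = insert b R" "b \<notin> R" "a \<notin> R" "c \<notin> R"
    using assms(1-4) by (auto simp: R_def)
  have "1 \<le> K" by (simp add: K_def)
  then have "0 \<le> 1/K - 1/K^2"
    by (simp add: field_simps power2_eq_square)
  note quadratic = var_idx_insert[OF R(1), folded K_def]
  have "var_idx V (insert b R) \<le> max (var_idx V (insert a R)) (var_idx V (insert c R))"
    unfolding quadratic[OF R(3)] quadratic[OF R(4)] quadratic[OF R(5)]
    by (rule convex_quadratic_le_max[OF \<open>0 \<le> 1/K - 1/K^2\<close> assms(5,6)])
  then show ?thesis
    unfolding R_def[symmetric] using R(2) by simp
qed

lemma kmaxvar_exists:
  assumes "k \<le> length V"
  shows "\<exists>I. is_kmaxvar V k I"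
proof -
  define S where "S = {J. J \<subseteq> {..<length V} \<and> card J = k}"
  have "finite S"
    unfolding S_def by (rule finite_subset[of _ "Pow {..<length V}"]) auto
  moreover have "{..<k} \<in> S"
    using assms by (auto simp: S_def)
  ultimately obtain I where "I \<in> S" "Max (var_idx V ` S) = var_idx V I"
    by (metis empty_iff obtains_MAX)
  moreover have "var_idx V J \<le> Max (var_idx V ` S)" if "J \<in> S" for J
    using \<open>finite S\<close> that by simp
  ultimately have "is_kmaxvar V k I"
    by (auto simp: is_kmaxvar_def S_def)
  then show ?thesis ..
qed

lemma sorted_kmaxvar_exchange:
  assumes "sorted V" "is_kmaxvar V k I" "b \<in> I" "a < b" "b < c" "c < length V" "a \<notin> I" "c \<notin> I"
  shows "is_kmaxvar V k (insert a (I - {b})) \<or> is_kmaxvar V k (insert c (I - {b}))"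
proof -
  have I: "I \<subseteq> {..<length V}" "card I = k" "finite I"
    using assms(2) finite_subset by (auto simp: is_kmaxvar_def)
  have admissible: "insert x (I - {b}) \<subseteq> {..<length V} \<and> card (insert x (I - {b})) = k"
    if "x \<notin> I" "x < length V" for x
    using I that assms(3) card_Suc_Diff1[OF I(3) assms(3)] by auto
  have "V ! a \<le> V ! b" "V ! b \<le> V ! c"
    using assms(1,4-6) by (auto intro: sorted_nth_mono)
  from var_idx_le_max_exchange[OF I(3) assms(3,7,8) this]
  have "var_idx V I \<le> var_idx V (insert a (I - {b})) \<or> var_idx V I \<le> var_idx V (insert c (I - {b}))"
    by linarith
  moreover have "is_kmaxvar V k J"
    if "J \<subseteq> {..<length V}" "card J = k" "var_idx V I \<le> var_idx V J" for J
    using assms(2) that unfolding is_kmaxvar_def by (meson order_trans)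
  ultimately show ?thesis
    using admissible[of a] admissible[of c] assms(4-8) by auto
qed

definition spread :: "nat set \<Rightarrow> nat" where
  "spread C = Max C - Min C"

lemma spread_exchange_Min_less:
  assumes "finite C" "C \<noteq> {}" "Min C < b" "b < Max C"
  shows "spread (insert b (C - {Min C})) < spread C"
proof -
  let ?D = "insert b (C - {Min C})"
  have "Max ?D \<le> Max C"
    using assms by (auto intro: Max.boundedI)
  moreover have "Min C < Min ?D"
    using assms(1,3) by (auto intro!: Min.boundedI simp: order.not_eq_order_implies_strict)
  moreover have "Min ?D \<le> Max ?D"
    using assms(1) by (intro order_trans[OF Min_le[of ?D b] Max_ge[of ?D b]]) auto
  ultimately show ?thesis
    unfolding spread_def by linarith
qed

lemma spread_exchange_Max_less:
  assumes "finite C" "C \<noteq> {}" "Min C < b" "b < Max C"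
  shows "spread (insert b (C - {Max C})) < spread C"
proof -
  let ?D = "insert b (C - {Max C})"
  have "Max ?D < Max C"
    using assms(1,4) by (auto intro!: Max.boundedI simp: order.not_eq_order_implies_strict)
  moreover have "Min C \<le> Min ?D"
    using assms by (auto intro: Min.boundedI)
  moreover have "Min ?D \<le> Max ?D"
    using assms(1) by (intro order_trans[OF Min_le[of ?D b] Max_ge[of ?D b]]) auto
  ultimately show ?thesis
    unfolding spread_def by linarith
qed

lemma kmaxvar_least_spread_complement_interval:
  fixes V :: "real list" and I :: "nat set"
  defines "C \<equiv> {..<length V} - I"
  assumes "sorted V" "k < length V" "is_kmaxvar V k I"
    and least: "\<And>J. is_kmaxvar V k J \<Longrightarrow> spread C \<le> spread ({..<length V} - J)"
  shows "C = {Min C..Max C}"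
proof -
  have I: "I \<subseteq> {..<length V}" "card I = k"
    using assms(4) by (auto simp: is_kmaxvar_def)
  have "finite C" by (simp add: C_def)
  have "card C = length V - k"
    using I finite_subset[OF I(1)] by (simp add: C_def card_Diff_subset)
  with assms(3) have "C \<noteq> {}" by auto
  with \<open>finite C\<close> have extremes: "Min C \<in> C" "Max C \<in> C" by simp_all
  have interval: "b \<in> C" if "Min C \<le> b" "b \<le> Max C" for b
  proof (rule ccontr)
    assume "b \<notin> C"
    with that extremes have "b \<in> I"
      by (auto simp: C_def)
    with that extremes have b: "b \<in> I" "Min C < b" "b < Max C"
      by (auto simp: C_def le_less)
    have exchange_complement: "{..<length V} - insert x (I - {b}) = insert b (C - {x})" if "x \<in> C" for x
      using that b(1) I(1) by (auto simp: C_def)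
    have "Max C < length V" "Min C \<notin> I" "Max C \<notin> I"
      using extremes by (auto simp: C_def)
    from sorted_kmaxvar_exchange[OF assms(2,4) b this]
    consider (Min) "is_kmaxvar V k (insert (Min C) (I - {b}))"
      | (Max) "is_kmaxvar V k (insert (Max C) (I - {b}))"
      by blast
    then show False
    proof cases
      case Min
      from least[OF Min] spread_exchange_Min_less[OF \<open>finite C\<close> \<open>C \<noteq> {}\<close> b(2,3)]
      show False
        unfolding exchange_complement[OF extremes(1)] by linarith
    next
      case Max
      from least[OF Max] spread_exchange_Max_less[OF \<open>finite C\<close> \<open>C \<noteq> {}\<close> b(2,3)]
      show False
        unfolding exchange_complement[OF extremes(2)] by linarith
    qed
  qed
  show ?thesis
  proof (rule set_eqI)
    fix x
    show "x \<in> C \<longleftrightarrow> x \<in> {Min C..Max C}"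
      using interval[of x] Min_le[OF \<open>finite C\<close>, of x] Max_ge[OF \<open>finite C\<close>, of x] by auto
  qed
qed

lemma complement_atLeastAtMost:
  assumes "I \<subseteq> {..<n}" "card I = k" "k < n" "{..<n} - I = {i..j}"
  shows "i \<le> k \<and> I = {0..<i} \<union> {i + n - k..<n}"
proof -
  have "Suc j - i = n - k"
    using card_Diff_subset[OF finite_subset[OF assms(1)] assms(1)] assms(2,4) by simp
  with assms(3) have "i \<le> j" by simp
  with assms(4) have "j < n"
    by (metis Diff_iff atLeastAtMost_iff lessThan_iff order_refl)
  with \<open>Suc j - i = n - k\<close> \<open>i \<le> j\<close> have "Suc j = i + n - k" "i \<le> k"
    by linarith+
  moreover have "I = {..<n} - {i..j}"
    using assms(1,4) by auto
  ultimately show ?thesis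
    using assms(3) by auto
qed

theorem mainTheorem3:
  fixes V :: "real list" and L U :: real and n k :: nat
  assumes "length V = n"
    and "\<forall>x\<in>set V. L \<le> x \<and> x \<le> U"
    and "sorted V"
    and "k < n"
  shows "\<exists>i\<le>k. is_kmaxvar V k ({0..<i} \<union> {i + n - k..<n})"
proof -
  let ?C = "\<lambda>I. {..<n} - I"
  obtain I0 where "is_kmaxvar V k I0"
    using kmaxvar_exists[of k V] assms(1,4) by auto
  then obtain I where I: "is_kmaxvar V k I"
    and least: "\<And>J. is_kmaxvar V k J \<Longrightarrow> spread (?C I) \<le> spread (?C J)"
    using ex_has_least_nat[of "is_kmaxvar V k" I0 "\<lambda>I. spread (?C I)"] by blast
  have "?C I = {Min (?C I)..Max (?C I)}"
    by (rule kmaxvar_least_spread_complement_interval[of V k I, unfolded assms(1), OF assms(3,4) I least])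
  moreover have "I \<subseteq> {..<n}" "card I = k"
    using I assms(1) by (auto simp: is_kmaxvar_def)
  ultimately obtain i where "i \<le> k" "I = {0..<i} \<union> {i + n - k..<n}"
    using complement_atLeastAtMost assms(4) by blast
  with I show ?thesis by auto
qed

end
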